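(* In the setting of the context, the enclosure $W_\Omega(T)\subset\overline{\mathbb{C}}$ has the following properties: (i) $W_\Omega(T)$ is symmetric with respect to the imaginary axis; (ii) $0\in W_\Omega(T)$ if and only if $0\in\overline{W(A)}$ or $c=0$; (iii) $\delta_+\in W_\Omega(T)$ if and only if $W(A)$ is unbounded or $0\in\overline{W(B)}$ or $c=0$; (iv) $\delta_-\in W_\Omega(T)$ if and only if $W(A)$ is unbounded or $0\in\overline{W(B)}$; (v) $\infty\in W_\Omega(T)$ if and only if $W(A)$ is unbounded.
   Context: Let $\mathcal{H}$ be a Hilbert space, $A$ a selfadjoint (possibly unbounded) operator in $\mathcal{H}$ and $B$ a nonzero bounded selfadjoint operator. Let $c\ge0$, $d>0$, $\theta:=\sqrt{c-d^2/4}$ (principal square root), $\delta_\pm:=\pm\theta-id/2$. $W(A),W(B)\subset\mathbb{R}$ are the numerical ranges. For real $\alpha,\beta$ let $p_{(\alpha,\beta)}(\omega):=(\alpha-\omega^2)(c-id\omega-\omega^2)-\beta\omega^2$, with roots $r_1,\dots,r_4$ labelled continuously in $(\alpha,\beta)\in\mathbb{R}^2$ and extended by limits to $\overline{\mathbb{R}}\times\mathbb{R}$ ($\overline{\mathbb{R}}=\mathbb{R}\cup\{\pm\infty\}$), with values in the Riemann sphere $\overline{\mathbb{C}}$. Let $\Omega:=\overline{W(A)}\times\overline{W(B)}$ (closure of $W(A)$ in $\overline{\mathbb{R}}$) and $W_\Omega(T):=\bigcup_{n=1}^4\bigcup_{(\alpha,\beta)\in\Omega}r_n(\alpha,\beta)$.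 *)

theory Defs
  imports "HOL-Analysis.Analysis" "HOL-Library.Extended_Real"
begin

definition pquart :: "real \<Rightarrow> real \<Rightarrow> real \<Rightarrow> real \<Rightarrow> complex \<Rightarrow> complex" where
  "pquart c d \<alpha> \<beta> \<omega> =
     (complex_of_real \<alpha> - \<omega>^2) * (complex_of_real c - \<i> * complex_of_real d * \<omega> - \<omega>^2)
     - complex_of_real \<beta> * \<omega>^2"

text \<open>The Riemann sphere is modelled as complex option, None being the point infinity.
  Convergence of a complex sequence to a point of the sphere (chordal topology).\<close>
definition conv_sphere :: "(nat \<Rightarrow> complex) \<Rightarrow> complex option \<Rightarrow> bool" where
  "conv_sphere f z = (case z of
      None \<Rightarrow> filterlim (\<lambda>k. norm (f k)) at_top sequentially
    | Some w \<Rightarrow> f \<longlonglongrightarrow> w)"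

text \<open>For finite alpha these
  are the roots of p; for alpha = +/-infinity they are the limits of the continuously labelled
  roots as alpha tends to +/-infinity, i.e. the limits on the sphere of root sequences.\<close>
definition root_set :: "real \<Rightarrow> real \<Rightarrow> ereal \<Rightarrow> real \<Rightarrow> complex option set" where
  "root_set c d a \<beta> = (case a of
      ereal \<alpha> \<Rightarrow> Some ` {\<omega>. pquart c d \<alpha> \<beta> \<omega> = 0}
    | PInfty \<Rightarrow> {z. \<exists>as ws. filterlim as at_top sequentially \<and>
                          (\<forall>k. pquart c d (as k) \<beta> (ws k) = 0) \<and> conv_sphere ws z}
    | MInfty \<Rightarrow> {z. \<exists>as ws. filterlim as at_bot sequentially \<and>
                          (\<forall>k. pquart c d (as k) \<beta> (ws k) = 0) \<and> conv_sphere ws z})"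

text \<open>W_Omega(T), with Omega = closure of W(A) in the extended reals times closure of W(B).\<close>
definition W_Omega :: "real \<Rightarrow> real \<Rightarrow> real set \<Rightarrow> real set \<Rightarrow> complex option set" where
  "W_Omega c d WA WB = (\<Union>a \<in> closure (ereal ` WA). \<Union>\<beta> \<in> closure WB. root_set c d a \<beta>)"

end

(* The points of W_Omega(T) over finite alpha are the roots of
   p(w) = (alpha - w^2) q(w) - beta w^2, where q(w) = c - i d w - w^2 is the damping quadratic with
   zeros delta_+ and delta_-.  Hence p(-conj w) = conj p(w), p(0) = alpha c and
   p(delta_+-) = -beta delta_+-^2; moreover delta_+ = 0 iff c = 0, while delta_- never vanishes.

   As |alpha| -> oo the roots accumulate exactly at oo and at the zeros of q.  Dividing p(w) = 0 by
   alpha shows that finite limits are zeros of q.  Conversely, write the monic quartic as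
   p(w) = prod_j (w - r_j) and fix v with q(v) /= 0, so that |p(v)| -> oo.  Since
   prod_j |v - r_j| = |p(v)|, some root satisfies |v - r_j|^4 >= |p(v)| and escapes to oo; and for a
   zero z of q the value p(z) = -beta z^2 does not depend on alpha, so
   prod_j |z - r_j| / |v - r_j| = |p(z)| / |p(v)| -> 0 forces some root towards z. *)

theory Submission
  imports Defs "HOL-Computational_Algebra.Fundamental_Theorem_Algebra"
begin

lemma ex_power_mult_prod_le:
  fixes a b :: "'i \<Rightarrow> 'a::linordered_idom"
  assumes "finite I" "I \<noteq> {}" "\<And>i. i \<in> I \<Longrightarrow> 0 \<le> a i" "\<And>i. i \<in> I \<Longrightarrow> 0 \<le> b i"
  shows "\<exists>i\<in>I. a i ^ card I * prod b I \<le> prod a I * b i ^ card I"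
proof (rule ccontr)
  assume "\<not> ?thesis"
  then have less: "prod a I * b i ^ card I < a i ^ card I * prod b I" if "i \<in> I" for i
    using that by (simp add: not_le)
  obtain i where "i \<in> I"
    using assms(2) by blast
  have "(\<Prod>i\<in>I. prod a I * b i ^ card I) < (\<Prod>i\<in>I. a i ^ card I * prod b I)"
  proof (rule prod_mono_strict)
    show "i \<in> I" "finite I"
      by fact+
    show "prod a I * b i ^ card I < a i ^ card I * prod b I"
      using \<open>i \<in> I\<close> by (rule less)
  next
    fix j assume "j \<in> I"
    have "0 \<le> prod a I * b j ^ card I"
      using assms \<open>j \<in> I\<close> by (intro mult_nonneg_nonneg prod_nonneg zero_le_power) auto
    with less[OF \<open>j \<in> I\<close>]
    show "0 \<le> prod a I * b j ^ card I \<and> prod a I * b j ^ card I \<le> a j ^ card I * prod b I"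
      and "0 < a j ^ card I * prod b I"
      by simp_all
  qed
  then show False
    by (simp add: prod.distrib prod_power_distrib mult.commute)
qed

lemma tendsto_of_relative_bound:
  fixes r :: "'i \<Rightarrow> 'a::real_normed_vector"
  assumes "eventually (\<lambda>k. norm (z - r k) \<le> e k * norm (v - r k)) F" and "(e \<longlongrightarrow> 0) F"
  shows "(r \<longlongrightarrow> z) F"
proof -
  have "eventually (\<lambda>k. \<bar>e k\<bar> < 1/2) F"
    using order_tendstoD(2)[OF tendsto_rabs_zero[OF assms(2)], of "1/2"] by simp
  with assms(1) have "eventually (\<lambda>k. norm (r k - z) \<le> 2 * \<bar>e k\<bar> * norm (v - z)) F"
  proof eventually_elim
    case (elim k)
    have "norm (z - r k) \<le> \<bar>e k\<bar> * norm (v - r k)"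
      using elim(1) mult_right_mono[OF abs_ge_self norm_ge_zero] by (rule order_trans)
    also have "\<dots> \<le> \<bar>e k\<bar> * norm (v - z) + \<bar>e k\<bar> * norm (z - r k)"
      using norm_triangle_ineq[of "v - z" "z - r k"] by (simp add: distrib_left[symmetric] mult_left_mono)
    also have "\<bar>e k\<bar> * norm (z - r k) \<le> norm (z - r k) / 2"
      using elim(2) mult_right_mono[of "\<bar>e k\<bar>" "1/2" "norm (z - r k)"] by simp
    finally show ?case
      by (simp add: norm_minus_commute)
  qed
  moreover have "((\<lambda>k. 2 * \<bar>e k\<bar> * norm (v - z)) \<longlongrightarrow> 0) F"
    by (intro tendsto_mult_left_zero tendsto_mult_right_zero tendsto_rabs_zero assms(2))
  ultimately have "((\<lambda>k. r k - z) \<longlongrightarrow> 0) F"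
    by (rule Lim_null_comparison)
  then show ?thesis
    by (simp add: LIM_zero_iff)
qed

lemma filterlim_at_top_of_power:
  fixes f :: "'i \<Rightarrow> real"
  assumes "filterlim (\<lambda>k. f k ^ n) at_top F" and "\<And>k. f k \<ge> 0" and "n > 0"
  shows "filterlim f at_top F"
  unfolding filterlim_at_top
proof
  fix Z :: real
  have "eventually (\<lambda>k. max Z 0 ^ n \<le> f k ^ n) F"
    using assms(1) by (simp add: filterlim_at_top)
  then show "eventually (\<lambda>k. Z \<le> f k) F"
  proof eventually_elim
    case (elim k)
    with assms(2,3) have "max Z 0 \<le> f k"
      by simp
    then show ?case
      by simp
  qed
qed

lemma ereal_in_closure_ereal_image_iff: "ereal x \<in> closure (ereal ` A) \<longleftrightarrow> x \<in> closure A"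
proof
  assume x: "ereal x \<in> closure (ereal ` A)"
  show "x \<in> closure A"
  proof (rule ccontr)
    assume "x \<notin> closure A"
    then have "ereal x \<in> ereal ` (- closure A)"
      by simp
    moreover have "open (ereal ` (- closure A))"
      by (intro open_ereal open_Compl closed_closure)
    moreover have "ereal ` (- closure A) \<inter> ereal ` A = {}"
      using closure_subset by auto
    ultimately have "ereal ` (- closure A) \<inter> closure (ereal ` A) = {}"
      using open_Int_closure_eq_empty by blast
    with x \<open>ereal x \<in> ereal ` (- closure A)\<close> show False
      by blast
  qed
next
  assume "x \<in> closure A"
  then have "ereal x \<in> ereal ` closure A"
    by (rule imageI)
  also have "ereal ` closure A \<subseteq> closure (ereal ` A)"
    by (rule image_closure_subset[OF continuous_on_ereal[OF continuous_on_id] closed_closure closure_subset])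
  finally show "ereal x \<in> closure (ereal ` A)" .
qed

lemma infinity_in_closure_ereal_image_iff:
  "(\<exists>a\<in>closure (ereal ` A). a = \<infinity> \<or> a = - \<infinity>) \<longleftrightarrow> \<not> bounded A"
proof
  assume "\<exists>a\<in>closure (ereal ` A). a = \<infinity> \<or> a = - \<infinity>"
  then obtain a where a: "a \<in> closure (ereal ` A)" "a = \<infinity> \<or> a = - \<infinity>"
    by blast
  show "\<not> bounded A"
  proof
    assume "bounded A"
    then obtain B where "\<forall>x\<in>A. \<bar>x\<bar> \<le> B"
      by (auto simp: bounded_real)
    then have "ereal ` A \<subseteq> {ereal (- B)..ereal B}"
      by (auto simp: abs_le_iff)
    then have "closure (ereal ` A) \<subseteq> {ereal (- B)..ereal B}"
      by (rule closure_minimal) simp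
    with a(1) have "a \<in> {ereal (- B)..ereal B}"
      by blast
    with a(2) show False
      by auto
  qed
next
  assume unbounded: "\<not> bounded A"
  show "\<exists>a\<in>closure (ereal ` A). a = \<infinity> \<or> a = - \<infinity>"
  proof (rule ccontr)
    assume "\<not> ?thesis"
    then have finite_closure: "a \<in> closure (ereal ` A) \<Longrightarrow> \<bar>a\<bar> \<noteq> \<infinity>" for a
      by auto
    have "A \<noteq> {}"
      using unbounded by auto
    then have ne: "closure (ereal ` A) \<noteq> {}"
      by simp
    obtain M where M: "Sup (closure (ereal ` A)) = ereal M"
      using finite_closure[OF closed_contains_Sup_cl[OF closed_closure ne]] by (cases "Sup (closure (ereal ` A))") auto
    obtain m where m: "Inf (closure (ereal ` A)) = ereal m"
      using finite_closure[OF closed_contains_Inf_cl[OF closed_closure ne]] by (cases "Inf (closure (ereal ` A))") auto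
    have "A \<subseteq> {m..M}"
    proof
      fix x assume "x \<in> A"
      then have "ereal x \<in> closure (ereal ` A)"
        by (intro subsetD[OF closure_subset] imageI)
      then have "ereal m \<le> ereal x" "ereal x \<le> ereal M"
        unfolding m[symmetric] M[symmetric] by (simp_all add: Inf_lower Sup_upper)
      then show "x \<in> {m..M}"
        by simp
    qed
    then have "bounded A"
      by (rule bounded_subset[OF bounded_closed_interval])
    with unbounded show False
      by contradiction
  qed
qed

lemma neg_csqrt_minus_imaginary_ne_0:
  assumes "d > 0"
  shows "- csqrt z - \<i> * complex_of_real d \<noteq> 0"
proof
  assume sum: "- csqrt z - \<i> * complex_of_real d = 0"
  define s where "s = csqrt z"
  have "0 < Re s \<or> Re s = 0 \<and> 0 \<le> Im s"
    unfolding s_def by (rule csqrt_principal)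
  moreover have "Re s = 0" "Im s = - d"
    using sum unfolding s_def[symmetric] by (simp_all add: complex_eq_iff)
  ultimately show False
    using assms by linarith
qed

definition damp_quad :: "real \<Rightarrow> real \<Rightarrow> complex \<Rightarrow> complex" where
  "damp_quad c d w = complex_of_real c - \<i> * complex_of_real d * w - w^2"

lemma pquart_eq_damp_quad:
  "pquart c d \<alpha> \<beta> w = (complex_of_real \<alpha> - w^2) * damp_quad c d w - complex_of_real \<beta> * w^2"
  unfolding pquart_def damp_quad_def ..

lemma damp_quad_nonzero:
  obtains v where "damp_quad c d v \<noteq> 0"
proof (cases "c = 0")
  case True
  then show ?thesis
    using that[of 1] by (simp add: damp_quad_def complex_eq_iff)
next
  case False
  then show ?thesis
    using that[of 0] by (simp add: damp_quad_def)
qed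

lemma damp_quad_csqrt:
  fixes c d :: real
  defines "t \<equiv> csqrt (complex_of_real (c - d^2/4))"
  shows "damp_quad c d (t - \<i> * complex_of_real (d/2)) = 0"
    and "damp_quad c d (- t - \<i> * complex_of_real (d/2)) = 0"
proof -
  have "t^2 = complex_of_real (c - d^2/4)"
    unfolding t_def by simp
  then show "damp_quad c d (t - \<i> * complex_of_real (d/2)) = 0"
    and "damp_quad c d (- t - \<i> * complex_of_real (d/2)) = 0"
    unfolding damp_quad_def power2_eq_square by (simp_all add: algebra_simps)
qed

lemma csqrt_minus_imaginary_eq_0_iff:
  assumes "d \<ge> 0"
  shows "csqrt (complex_of_real (c - d^2/4)) - \<i> * complex_of_real (d/2) = 0 \<longleftrightarrow> c = 0"
proof
  assume "csqrt (complex_of_real (c - d^2/4)) - \<i> * complex_of_real (d/2) = 0"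
  with damp_quad_csqrt(1)[of c d] have "damp_quad c d 0 = 0"
    by metis
  then show "c = 0"
    by (simp add: damp_quad_def)
next
  assume "c = 0"
  with assms show "csqrt (complex_of_real (c - d^2/4)) - \<i> * complex_of_real (d/2) = 0"
    by (simp add: real_sqrt_divide)
qed

lemma pquart_at_0_eq_0_iff: "pquart c d \<alpha> \<beta> 0 = 0 \<longleftrightarrow> \<alpha> = 0 \<or> c = 0"
  by (simp add: pquart_def)

lemma pquart_eq_0_at_damp_quad_root:
  assumes "damp_quad c d \<delta> = 0"
  shows "pquart c d \<alpha> \<beta> \<delta> = 0 \<longleftrightarrow> \<beta> = 0 \<or> \<delta> = 0"
  by (simp add: pquart_eq_damp_quad assms)

lemma pquart_reflect: "pquart c d \<alpha> \<beta> (- cnj w) = cnj (pquart c d \<alpha> \<beta> w)"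
  unfolding pquart_def by simp

lemma damp_quad_reflect: "damp_quad c d (- cnj w) = cnj (damp_quad c d w)"
  unfolding damp_quad_def by simp

lemma pquart_factor:
  obtains r :: "nat \<Rightarrow> complex" where "\<And>w. pquart c d \<alpha> \<beta> w = (\<Prod>j<4. w - r j)"
proof -
  define P where "P = [:complex_of_real (\<alpha> * c), - \<i> * complex_of_real (\<alpha> * d),
    - complex_of_real (\<alpha> + c + \<beta>), \<i> * complex_of_real d, 1:]"
  have "degree P = 4" "lead_coeff P = 1"
    unfolding P_def by (simp_all add: eval_nat_numeral)
  moreover obtain r where "smult (lead_coeff P) (\<Prod>j<degree P. [:- r j, 1:]) = P"
    by (rule complex_poly_decompose')
  ultimately have "poly P w = poly (\<Prod>j<4. [:- r j, 1:]) w" for w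
    by simp
  then have "poly P w = (\<Prod>j<4. w - r j)" for w
    by (simp add: poly_prod)
  moreover have "poly P w = pquart c d \<alpha> \<beta> w" for w
    unfolding P_def pquart_def by (simp add: algebra_simps power2_eq_square eval_nat_numeral)
  ultimately show ?thesis using that by simp
qed

lemma pquart_root_near:
  "\<exists>w. pquart c d \<alpha> \<beta> w = 0 \<and>
     norm (u - w)^4 * norm (pquart c d \<alpha> \<beta> v) \<le> norm (pquart c d \<alpha> \<beta> u) * norm (v - w)^4"
proof -
  obtain r :: "nat \<Rightarrow> complex" where r: "\<And>w. pquart c d \<alpha> \<beta> w = (\<Prod>j<4. w - r j)"
    using pquart_factor by blast
  obtain j where "j < 4"
      "norm (u - r j)^4 * (\<Prod>j<4. norm (v - r j)) \<le> (\<Prod>j<4. norm (u - r j)) * norm (v - r j)^4"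
    using ex_power_mult_prod_le[of "{..<4::nat}" "\<lambda>j. norm (u - r j)" "\<lambda>j. norm (v - r j)"]
    by (auto simp: lessThan_empty_iff)
  then show ?thesis
    by (intro exI[of _ "r j"]) (auto simp: r prod_norm)
qed

lemma pquart_root_far:
  "\<exists>w. pquart c d \<alpha> \<beta> w = 0 \<and> norm (pquart c d \<alpha> \<beta> v) \<le> norm (v - w)^4"
proof -
  obtain r :: "nat \<Rightarrow> complex" where r: "\<And>w. pquart c d \<alpha> \<beta> w = (\<Prod>j<4. w - r j)"
    using pquart_factor by blast
  obtain j where "j < 4" "(\<Prod>j<4. norm (v - r j)) \<le> norm (v - r j)^4"
    using ex_power_mult_prod_le[of "{..<4::nat}" "\<lambda>_. 1" "\<lambda>j. norm (v - r j)"]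
    by (auto simp: lessThan_empty_iff)
  then show ?thesis
    by (intro exI[of _ "r j"]) (auto simp: r prod_norm)
qed

lemma norm_pquart_at_top:
  assumes "damp_quad c d v \<noteq> 0" and "filterlim (\<lambda>k. \<bar>as k\<bar>) at_top F"
  shows "filterlim (\<lambda>k. norm (pquart c d (as k) \<beta> v)) at_top F"
proof -
  define K where "K = norm (v^2 * damp_quad c d v + complex_of_real \<beta> * v^2)"
  have lim: "filterlim (\<lambda>k. - K + \<bar>as k\<bar> * norm (damp_quad c d v)) at_top F"
    by (intro filterlim_tendsto_add_at_top[OF tendsto_const] filterlim_at_top_mult_tendsto_pos[OF tendsto_const])
      (use assms in auto)
  have bound: "- K + \<bar>\<alpha>\<bar> * norm (damp_quad c d v) \<le> norm (pquart c d \<alpha> \<beta> v)" for \<alpha>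
  proof -
    have "pquart c d \<alpha> \<beta> v = complex_of_real \<alpha> * damp_quad c d v - (v^2 * damp_quad c d v + complex_of_real \<beta> * v^2)"
      by (simp add: pquart_eq_damp_quad algebra_simps)
    then show ?thesis
      using norm_triangle_ineq2[of "complex_of_real \<alpha> * damp_quad c d v" "v^2 * damp_quad c d v + complex_of_real \<beta> * v^2"]
      unfolding K_def by (simp add: norm_mult)
  qed
  show ?thesis
    using lim by (rule filterlim_at_top_mono) (intro always_eventually allI bound)
qed

lemma damp_quad_eq_0_if_roots_tendsto:
  assumes "filterlim (\<lambda>k. \<bar>as k\<bar>) at_top sequentially"
    and "\<And>k. pquart c d (as k) \<beta> (ws k) = 0" and "ws \<longlonglongrightarrow> w"
  shows "damp_quad c d w = 0"
proof -
  define N where "N k = ws k^2 * damp_quad c d (ws k) + complex_of_real \<beta> * ws k^2" for k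
  have "damp_quad c d (ws k) = N k / complex_of_real (as k)" if "as k \<noteq> 0" for k
    using assms(2)[of k] that unfolding N_def pquart_eq_damp_quad by (simp add: field_simps)
  moreover have "eventually (\<lambda>k. as k \<noteq> 0) sequentially"
    using eventually_compose_filterlim[OF eventually_gt_at_top assms(1), of 0] by simp
  ultimately have eq: "eventually (\<lambda>k. N k / complex_of_real (as k) = damp_quad c d (ws k)) sequentially"
    by (auto elim: eventually_mono)
  have "(\<lambda>k. N k / complex_of_real (as k)) \<longlonglongrightarrow> 0"
  proof (rule tendsto_divide_0)
    show "N \<longlonglongrightarrow> w^2 * damp_quad c d w + complex_of_real \<beta> * w^2"
      unfolding N_def damp_quad_def by (intro tendsto_intros assms(3))
    show "filterlim (\<lambda>k. complex_of_real (as k)) at_infinity sequentially"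
      using assms(1) by (intro filterlim_norm_at_top_imp_at_infinity) simp
  qed
  then have "(\<lambda>k. damp_quad c d (ws k)) \<longlonglongrightarrow> 0"
    using eq by (rule Lim_transform_eventually)
  moreover have "(\<lambda>k. damp_quad c d (ws k)) \<longlonglongrightarrow> damp_quad c d w"
    unfolding damp_quad_def by (intro tendsto_intros assms(3))
  ultimately show ?thesis
    using LIMSEQ_unique by blast
qed

lemma roots_tendsto_infinity:
  assumes "filterlim (\<lambda>k. \<bar>as k\<bar>) at_top sequentially"
  shows "\<exists>ws. (\<forall>k. pquart c d (as k) \<beta> (ws k) = 0) \<and> filterlim (\<lambda>k. norm (ws k)) at_top sequentially"
proof -
  obtain v where v: "damp_quad c d v \<noteq> 0"
    by (rule damp_quad_nonzero)
  have "\<forall>k. \<exists>w. pquart c d (as k) \<beta> w = 0 \<and> norm (pquart c d (as k) \<beta> v) \<le> norm (v - w)^4"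
    using pquart_root_far by blast
  from choice[OF this] obtain ws where ws: "\<And>k. pquart c d (as k) \<beta> (ws k) = 0"
    "\<And>k. norm (pquart c d (as k) \<beta> v) \<le> norm (v - ws k)^4"
    by blast
  have "filterlim (\<lambda>k. norm (v - ws k)^4) at_top sequentially"
    using norm_pquart_at_top[OF v assms, where \<beta> = \<beta>] by (rule filterlim_at_top_mono) (simp add: ws(2))
  then have "filterlim (\<lambda>k. norm (v - ws k)) at_top sequentially"
    by (rule filterlim_at_top_of_power) simp_all
  then have "filterlim (\<lambda>k. - norm v + norm (v - ws k)) at_top sequentially"
    by (rule filterlim_tendsto_add_at_top[OF tendsto_const])
  moreover have "- norm v + norm (v - w) \<le> norm w" for w
    using norm_triangle_ineq4[of v w] by linarith
  ultimately have "filterlim (\<lambda>k. norm (ws k)) at_top sequentially"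
    by (rule filterlim_at_top_mono[OF _ always_eventually, OF _ allI])
  with ws(1) show ?thesis
    by blast
qed

lemma roots_tendsto_damp_quad_zero:
  assumes "filterlim (\<lambda>k. \<bar>as k\<bar>) at_top sequentially" and "damp_quad c d z = 0"
  shows "\<exists>ws. (\<forall>k. pquart c d (as k) \<beta> (ws k) = 0) \<and> ws \<longlonglongrightarrow> z"
proof -
  obtain v where v: "damp_quad c d v \<noteq> 0"
    by (rule damp_quad_nonzero)
  define C where "C = norm (complex_of_real \<beta> * z^2)"
  define D where "D k = norm (pquart c d (as k) \<beta> v)" for k
  have "norm (pquart c d \<alpha> \<beta> z) = C" for \<alpha>
    unfolding C_def pquart_eq_damp_quad assms(2) by simp
  then have "\<forall>k. \<exists>w. pquart c d (as k) \<beta> w = 0 \<and> norm (z - w)^4 * D k \<le> C * norm (v - w)^4"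
    using pquart_root_near[of c d _ \<beta> z v] unfolding D_def by metis
  from choice[OF this] obtain ws where ws: "\<And>k. pquart c d (as k) \<beta> (ws k) = 0"
    "\<And>k. norm (z - ws k)^4 * D k \<le> C * norm (v - ws k)^4"
    by blast
  have D: "filterlim D at_top sequentially"
    unfolding D_def using v assms(1) by (rule norm_pquart_at_top)
  have "eventually (\<lambda>k. norm (z - ws k) \<le> root 4 (C / D k) * norm (v - ws k)) sequentially"
    using eventually_compose_filterlim[OF eventually_gt_at_top D, of 0]
  proof eventually_elim
    case (elim k)
    have "norm (z - ws k)^4 \<le> C / D k * norm (v - ws k)^4"
      using ws(2)[of k] elim by (simp add: field_simps)
    also have "\<dots> = (root 4 (C / D k) * norm (v - ws k))^4"
      using elim by (simp add: C_def power_mult_distrib)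
    finally show ?case
      using elim by (simp add: C_def)
  qed
  moreover have "(\<lambda>k. root 4 (C / D k)) \<longlonglongrightarrow> 0"
    using tendsto_real_root[OF tendsto_divide_0[OF tendsto_const filterlim_at_top_imp_at_infinity[OF D]], of 4 C]
    by simp
  ultimately have "ws \<longlonglongrightarrow> z"
    by (rule tendsto_of_relative_bound)
  with ws(1) show ?thesis
    by blast
qed

lemma root_set_ereal [simp]: "root_set c d (ereal x) \<beta> = Some ` {w. pquart c d x \<beta> w = 0}"
  by (simp add: root_set_def)

lemma root_limits_eq:
  assumes abs: "\<And>as. filterlim as F sequentially \<Longrightarrow> filterlim (\<lambda>k. \<bar>as k\<bar>) at_top sequentially"
    and as0: "filterlim as0 F sequentially"
  shows "{z. \<exists>as ws. filterlim as F sequentially \<and> (\<forall>k. pquart c d (as k) \<beta> (ws k) = 0) \<and> conv_sphere ws z}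
    = insert None (Some ` {w. damp_quad c d w = 0})"
proof (intro set_eqI iffI)
  fix z
  assume "z \<in> {z. \<exists>as ws. filterlim as F sequentially \<and> (\<forall>k. pquart c d (as k) \<beta> (ws k) = 0) \<and> conv_sphere ws z}"
  then obtain as ws where as: "filterlim as F sequentially"
    and ws: "\<And>k. pquart c d (as k) \<beta> (ws k) = 0" "conv_sphere ws z"
    by blast
  show "z \<in> insert None (Some ` {w. damp_quad c d w = 0})"
  proof (cases z)
    case (Some w)
    with ws(2) have "ws \<longlonglongrightarrow> w"
      by (simp add: conv_sphere_def)
    with Some show ?thesis
      using damp_quad_eq_0_if_roots_tendsto[OF abs[OF as] ws(1)] by blast
  qed simp
next
  fix z
  assume "z \<in> insert None (Some ` {w. damp_quad c d w = 0})"
  then consider "z = None" | w where "z = Some w" "damp_quad c d w = 0"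
    by blast
  then show "z \<in> {z. \<exists>as ws. filterlim as F sequentially \<and> (\<forall>k. pquart c d (as k) \<beta> (ws k) = 0) \<and> conv_sphere ws z}"
  proof cases
    case 1
    with as0 roots_tendsto_infinity[OF abs[OF as0]] show ?thesis
      by (auto simp: conv_sphere_def)
  next
    case 2
    with as0 roots_tendsto_damp_quad_zero[OF abs[OF as0] 2(2)] show ?thesis
      by (auto simp: conv_sphere_def)
  qed
qed

lemma root_set_infinity:
  assumes "a = \<infinity> \<or> a = - \<infinity>"
  shows "root_set c d a \<beta> = insert None (Some ` {w. damp_quad c d w = 0})"
  using assms
proof
  assume "a = \<infinity>"
  have "filterlim (\<lambda>k. \<bar>as k\<bar>) at_top sequentially" if "filterlim as at_top sequentially" for as :: "nat \<Rightarrow> real"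
    using that by (rule filterlim_at_top_mono) (intro always_eventually allI abs_ge_self)
  from root_limits_eq[OF this filterlim_real_sequentially] show ?thesis
    by (simp add: root_set_def \<open>a = \<infinity>\<close>)
next
  assume "a = - \<infinity>"
  have "filterlim (\<lambda>k. \<bar>as k\<bar>) at_top sequentially" if "filterlim as at_bot sequentially" for as :: "nat \<Rightarrow> real"
    using that unfolding filterlim_uminus_at_bot
    by (rule filterlim_at_top_mono) (intro always_eventually allI abs_ge_minus_self)
  moreover have "filterlim (\<lambda>k. - real k) at_bot sequentially"
    by (simp add: filterlim_uminus_at_bot filterlim_real_sequentially)
  ultimately show ?thesis
    using root_limits_eq by (simp add: root_set_def \<open>a = - \<infinity>\<close>)
qed

lemma root_set_reflect:
  assumes "z \<in> root_set c d a \<beta>"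
  shows "map_option (\<lambda>w. - cnj w) z \<in> root_set c d a \<beta>"
  using assms by (cases a) (auto simp: pquart_reflect damp_quad_reflect root_set_infinity)

lemma W_Omega_reflect:
  "map_option (\<lambda>w. - cnj w) ` W_Omega c d WA WB = W_Omega c d WA WB"
proof -
  let ?f = "map_option (\<lambda>w. - cnj w)"
  have maps_to: "?f z \<in> W_Omega c d WA WB" if "z \<in> W_Omega c d WA WB" for z
  proof -
    from that obtain a \<beta> where "a \<in> closure (ereal ` WA)" "\<beta> \<in> closure WB" "z \<in> root_set c d a \<beta>"
      unfolding W_Omega_def by blast
    then show ?thesis
      unfolding W_Omega_def by (blast intro: root_set_reflect)
  qed
  have involution: "?f (?f z) = z" for z
    by (cases z) simp_all
  show ?thesis
  proof
    show "?f ` W_Omega c d WA WB \<subseteq> W_Omega c d WA WB"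
      using maps_to by blast
    show "W_Omega c d WA WB \<subseteq> ?f ` W_Omega c d WA WB"
    proof
      fix z assume "z \<in> W_Omega c d WA WB"
      then have "?f (?f z) \<in> ?f ` W_Omega c d WA WB"
        by (intro imageI maps_to)
      then show "z \<in> ?f ` W_Omega c d WA WB"
        by (simp only: involution)
    qed
  qed
qed

lemma W_Omega_eq:
  assumes "WB \<noteq> {}"
  shows "W_Omega c d WA WB =
    (\<Union>x\<in>closure WA. \<Union>\<beta>\<in>closure WB. Some ` {w. pquart c d x \<beta> w = 0})
    \<union> (if bounded WA then {} else insert None (Some ` {w. damp_quad c d w = 0}))"
proof -
  define I where "I = {a \<in> closure (ereal ` WA). a = \<infinity> \<or> a = - \<infinity>}"
  define R where "R = insert None (Some ` {w. damp_quad c d w = 0})"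
  have "closure (ereal ` WA) = ereal ` closure WA \<union> I"
  proof (intro set_eqI)
    fix a
    show "a \<in> closure (ereal ` WA) \<longleftrightarrow> a \<in> ereal ` closure WA \<union> I"
      unfolding I_def by (cases a) (auto simp: ereal_in_closure_ereal_image_iff)
  qed
  then have "W_Omega c d WA WB =
      (\<Union>x\<in>closure WA. \<Union>\<beta>\<in>closure WB. Some ` {w. pquart c d x \<beta> w = 0})
      \<union> (\<Union>a\<in>I. \<Union>\<beta>\<in>closure WB. root_set c d a \<beta>)"
    unfolding W_Omega_def by simp
  also have "(\<Union>a\<in>I. \<Union>\<beta>\<in>closure WB. root_set c d a \<beta>) = (\<Union>a\<in>I. \<Union>\<beta>\<in>closure WB. R)"
    unfolding I_def R_def by (intro SUP_cong refl) (simp add: root_set_infinity)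
  also have "\<dots> = (if bounded WA then {} else R)"
  proof -
    have "I = {} \<longleftrightarrow> bounded WA"
      unfolding I_def using infinity_in_closure_ereal_image_iff[of WA] by blast
    moreover have "closure WB \<noteq> {}"
      using assms by simp
    ultimately show ?thesis
      by simp
  qed
  finally show ?thesis
    unfolding R_def .
qed

lemma Some_in_W_Omega_iff:
  assumes "WB \<noteq> {}"
  shows "Some w \<in> W_Omega c d WA WB \<longleftrightarrow>
    (\<exists>x\<in>closure WA. \<exists>\<beta>\<in>closure WB. pquart c d x \<beta> w = 0) \<or> (\<not> bounded WA \<and> damp_quad c d w = 0)"
  by (auto simp: W_Omega_eq[OF assms])

lemma None_in_W_Omega_iff:
  assumes "WB \<noteq> {}"
  shows "None \<in> W_Omega c d WA WB \<longleftrightarrow> \<not> bounded WA"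
  by (simp add: W_Omega_eq[OF assms])

theorem proposition2p2:
  fixes c d :: real and WA WB :: "real set"
  assumes "c \<ge> 0" and "d > 0"
    and "WA \<noteq> {}" and "is_interval WA"
    and "WB \<noteq> {}" and "is_interval WB" and "bounded WB" and "WB \<noteq> {0}"
  defines "\<theta> \<equiv> csqrt (complex_of_real (c - d^2/4))"
  defines "\<delta>p \<equiv> \<theta> - \<i> * complex_of_real (d/2)"
  defines "\<delta>m \<equiv> - \<theta> - \<i> * complex_of_real (d/2)"
  shows "map_option (\<lambda>w. - cnj w) ` W_Omega c d WA WB = W_Omega c d WA WB
    \<and> (Some 0 \<in> W_Omega c d WA WB \<longleftrightarrow> (0 \<in> closure WA \<or> c = 0))
    \<and> (Some \<delta>p \<in> W_Omega c d WA WB \<longleftrightarrow> (\<not> bounded WA \<or> 0 \<in> closure WB \<or> c = 0))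
    \<and> (Some \<delta>m \<in> W_Omega c d WA WB \<longleftrightarrow> (\<not> bounded WA \<or> 0 \<in> closure WB))
    \<and> (None \<in> W_Omega c d WA WB \<longleftrightarrow> \<not> bounded WA)"
proof -
  note Some_in_W = Some_in_W_Omega_iff[OF \<open>WB \<noteq> {}\<close>]
  obtain x0 \<beta>0 where x0: "x0 \<in> closure WA" and \<beta>0: "\<beta>0 \<in> closure WB"
    using assms(3,5) closure_subset by (meson all_not_in_conv subsetD)
  have roots: "damp_quad c d \<delta>p = 0" "damp_quad c d \<delta>m = 0"
    unfolding \<delta>p_def \<delta>m_def \<theta>_def by (fact damp_quad_csqrt)+
  have \<delta>p_eq_0: "\<delta>p = 0 \<longleftrightarrow> c = 0"
    unfolding \<delta>p_def \<theta>_def using \<open>d > 0\<close> by (intro csqrt_minus_imaginary_eq_0_iff) simp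
  have \<delta>m_ne_0: "\<delta>m \<noteq> 0"
    unfolding \<delta>m_def \<theta>_def using \<open>d > 0\<close> by (intro neg_csqrt_minus_imaginary_ne_0) simp
  have "Some \<delta>p \<in> W_Omega c d WA WB \<longleftrightarrow> (\<not> bounded WA \<or> 0 \<in> closure WB \<or> c = 0)"
    unfolding Some_in_W pquart_eq_0_at_damp_quad_root[OF roots(1)] using x0 \<beta>0 roots(1) \<delta>p_eq_0 by blast
  moreover have "Some \<delta>m \<in> W_Omega c d WA WB \<longleftrightarrow> (\<not> bounded WA \<or> 0 \<in> closure WB)"
    unfolding Some_in_W pquart_eq_0_at_damp_quad_root[OF roots(2)] using x0 \<beta>0 roots(2) \<delta>m_ne_0 by blast
  moreover have "Some 0 \<in> W_Omega c d WA WB \<longleftrightarrow> (0 \<in> closure WA \<or> c = 0)"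
    unfolding Some_in_W pquart_at_0_eq_0_iff using x0 \<beta>0 by (auto simp: damp_quad_def)
  ultimately show ?thesis
    using W_Omega_reflect None_in_W_Omega_iff[OF \<open>WB \<noteq> {}\<close>] by blast
qed

end
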